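(* Let $x_0\in(-2,2)$, $0<\alpha<1$ and let $K\subset\{\eta\in\mathbb{C}:\operatorname{Im}\eta>0\}$ be compact. For $N,n\in\mathbb{N}$, $c_1,\dots,c_N\in\mathbb{R}$ and $\eta_1,\dots,\eta_N\in K$ put $\lambda_j=x_0+\eta_j/n^\alpha$ and $\phi^{(n)}=\frac{1}{n^\alpha}\sum_{j=1}^Nc_ja_{\lambda_j}=\sum_{k\in\mathbb{Z}}\phi^{(n)}_kz^k$. Then there exist $d_1,d_2>0$ (depending only on $x_0,\alpha,K$) such that $$|\phi^{(n)}_k|\le\frac{d_1}{n^\alpha}\left(\sum_{j=1}^N|c_j|\right)e^{-d_2|k|/n^\alpha}$$ for all $k\in\mathbb{Z}$, $n,N\in\mathbb{N}$, $\eta_j\in K$, $c_j\in\mathbb{R}$.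
   Context: For $\lambda\in\mathbb{C}\setminus[-2,2]$, $\omega(\lambda)=\frac{\lambda-\sqrt{\lambda^2-4}}{2}$, with the branch making $\omega$ analytic on $\mathbb{C}\setminus[-2,2]$ and $\omega(\lambda)=O(1/\lambda)$ as $\lambda\to\infty$ (so $|\omega(\lambda)|<1$). For $\operatorname{Im}\lambda>0$, $a_\lambda$ is the Laurent series $a_\lambda(z)=\sum_{j\in\mathbb{Z}}\operatorname{Im}\left(\frac{\omega(\lambda)^{|j|}}{\omega(\lambda)-\omega(\lambda)^{-1}}\right)z^j$. *)

theory Defs
  imports "HOL-Analysis.Analysis"
begin

text \<open>omega(lambda) = (lambda - sqrt(lambda^2 - 4))/2, with the branch of sqrt(lambda^2-4)
  analytic on C minus [-2,2] and asymptotic to lambda at infinity, written explicitly as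
  csqrt(lambda - 2) * csqrt(lambda + 2) (principal square roots).\<close>
definition omega :: "complex \<Rightarrow> complex" where
  "omega lam = (lam - csqrt (lam - 2) * csqrt (lam + 2)) / 2"

definition a_coeff :: "complex \<Rightarrow> int \<Rightarrow> real" where
  "a_coeff lam j = Im (omega lam ^ nat \<bar>j\<bar> / (omega lam - inverse (omega lam)))"

definition phi_coeff :: "real \<Rightarrow> real \<Rightarrow> nat \<Rightarrow> nat \<Rightarrow> (nat \<Rightarrow> real) \<Rightarrow> (nat \<Rightarrow> complex) \<Rightarrow> int \<Rightarrow> real" where
  "phi_coeff x0 \<alpha> n N c \<eta> k =
     (1 / real n powr \<alpha>) *
     (\<Sum>j=1..N. c j * a_coeff (complex_of_real x0 + \<eta> j / complex_of_real (real n powr \<alpha>)) k)"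

end

theory Submission imports Defs begin

text \<open>Since \<open>\<omega> + 1/\<omega> = \<lambda>\<close> and \<open>\<omega> - 1/\<omega> = -sqrt(\<lambda>\<^sup>2 - 4)\<close>, the coefficients of
  \<open>a\<^sub>\<lambda>\<close> are bounded by \<open>|\<omega>|\<^bsup>|k|\<^esup> / sqrt |\<lambda>\<^sup>2 - 4|\<close>. Taking imaginary parts of
  \<open>\<lambda> = \<omega> + 1/\<omega>\<close> with \<open>Im \<omega> < 0\<close> gives \<open>Im \<lambda> \<le> 1/|\<omega>| - |\<omega>|\<close>, hence
  \<open>|\<omega>| \<le> 2/(2 + Im \<lambda>) \<le> exp (- Im \<lambda> / (2 + Im \<lambda>))\<close>. For \<open>\<lambda> = x\<^sub>0 + \<eta>/n\<^sup>\<alpha>\<close> with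
  \<open>\<eta> \<in> K\<close> one has \<open>Im \<lambda> \<ge> m/n\<^sup>\<alpha>\<close>, which yields the exponential decay rate, and \<open>\<lambda>\<close> stays
  uniformly away from \<open>\<plusminus>2\<close>: either \<open>\<eta>/n\<^sup>\<alpha>\<close> is small compared to \<open>2 - |x\<^sub>0|\<close>, or \<open>n\<^sup>\<alpha>\<close> is
  bounded and then so is \<open>Im \<lambda>\<close> from below.\<close>

definition omega_root :: "complex \<Rightarrow> complex" where
  "omega_root lam = csqrt (lam - 2) * csqrt (lam + 2)"

lemma omega_eq: "omega lam = (lam - omega_root lam) / 2"
  by (simp add: omega_def omega_root_def)

lemma omega_root_squared: "omega_root lam ^ 2 = lam ^ 2 - 4"
proof -
  have "omega_root lam ^ 2 = (lam - 2) * (lam + 2)"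
    by (simp add: omega_root_def power_mult_distrib)
  then show ?thesis by (simp add: algebra_simps power2_eq_square)
qed

lemma inverse_omega: "inverse (omega lam) = (lam + omega_root lam) / 2"
proof -
  have "omega lam * ((lam + omega_root lam) / 2) = (lam ^ 2 - omega_root lam ^ 2) / 4"
    by (simp add: omega_eq field_simps power2_eq_square)
  also have "\<dots> = 1" by (simp add: omega_root_squared)
  finally show ?thesis by (rule inverse_unique)
qed

lemma omega_minus_inverse: "omega lam - inverse (omega lam) = - omega_root lam"
  by (simp only: inverse_omega) (simp add: omega_eq field_simps)

lemma omega_plus_inverse: "omega lam + inverse (omega lam) = lam"
  by (simp only: inverse_omega) (simp add: omega_eq field_simps)

lemma norm_omega_root: "norm (omega_root lam) = sqrt (norm (lam - 2) * norm (lam + 2))"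
  by (simp add: omega_root_def norm_mult real_sqrt_mult)

lemma Im_csqrt_nonneg: "0 \<le> Im z \<Longrightarrow> 0 \<le> Im (csqrt z)"
  using complex_Re_le_cmod[of z] by auto

lemma Im_omega_root_nonneg: "0 \<le> Im lam \<Longrightarrow> 0 \<le> Im (omega_root lam)"
  unfolding omega_root_def
  using Im_csqrt_nonneg[of "lam - 2"] Im_csqrt_nonneg[of "lam + 2"]
    Re_csqrt[of "lam - 2"] Re_csqrt[of "lam + 2"]
  by simp

lemma Im_inverse_norm: "Im (inverse z) = - Im z / norm z ^ 2"
  by (simp add: cmod_power2)

lemma Im_omega_neg:
  assumes "0 < Im lam"
  shows "Im (omega lam) < 0"
proof -
  have "0 < Im (inverse (omega lam))"
    using assms Im_omega_root_nonneg[of lam] by (simp add: inverse_omega)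
  then show ?thesis
    by (metis Im_inverse_norm zero_less_divide_iff neg_0_less_iff_less zero_le_power2 not_less)
qed

lemma Im_le_inverse_norm_omega_minus_norm:
  assumes "0 < Im lam"
  shows "Im lam \<le> 1 / norm (omega lam) - norm (omega lam)"
proof -
  define w where "w = omega lam"
  define r where "r = norm w"
  have Im_w: "0 < - Im w" "- Im w \<le> r"
    using Im_omega_neg[OF assms] abs_Im_le_cmod[of w] by (auto simp: w_def r_def)
  then have "0 < r" by linarith
  have "Im lam = Im w + Im (inverse w)"
    using omega_plus_inverse[of lam] by (metis w_def plus_complex.sel(2))
  also have "\<dots> = - Im w * (1 / r ^ 2 - 1)"
    unfolding Im_inverse_norm using \<open>0 < r\<close> by (simp add: r_def field_simps)
  finally have Im_lam: "Im lam = - Im w * (1 / r ^ 2 - 1)" .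
  with assms Im_w have "0 < 1 / r ^ 2 - 1"
    by (metis zero_less_mult_pos)
  then have "Im lam \<le> r * (1 / r ^ 2 - 1)"
    unfolding Im_lam using Im_w by (intro mult_right_mono) auto
  also have "\<dots> = 1 / r - r"
    using \<open>0 < r\<close> by (simp add: field_simps power2_eq_square)
  finally show ?thesis by (simp add: r_def w_def)
qed

lemma norm_omega_le_exp:
  assumes "0 < Im lam"
  shows "norm (omega lam) \<le> exp (- Im lam / (2 + Im lam))"
proof -
  define r where "r = norm (omega lam)"
  define y where "y = Im lam"
  have "0 < r"
    using Im_omega_neg[OF assms] by (auto simp: r_def)
  have "y * r \<le> 1 - r ^ 2"
    using Im_le_inverse_norm_omega_minus_norm[OF assms] \<open>0 < r\<close>
    by (simp add: r_def y_def field_simps power2_eq_square)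
  moreover have "0 \<le> (1 - r) ^ 2" by simp
  ultimately have "r * (2 + y) \<le> 2"
    by (simp add: algebra_simps power2_eq_square)
  then have "r \<le> 1 + (- y / (2 + y))"
    using assms by (simp add: y_def field_simps)
  also have "\<dots> \<le> exp (- y / (2 + y))"
    by (rule exp_ge_add_one_self)
  finally show ?thesis by (simp add: r_def y_def)
qed

lemma abs_a_coeff_le:
  assumes "0 < Im lam"
  shows "\<bar>a_coeff lam k\<bar>
    \<le> exp (- Im lam / (2 + Im lam) * \<bar>k\<bar>) / sqrt (norm (lam - 2) * norm (lam + 2))"
proof -
  have "\<bar>a_coeff lam k\<bar> \<le> norm (omega lam ^ nat \<bar>k\<bar> / (omega lam - inverse (omega lam)))"
    unfolding a_coeff_def by (rule abs_Im_le_cmod)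
  also have "\<dots> = norm (omega lam) ^ nat \<bar>k\<bar> / sqrt (norm (lam - 2) * norm (lam + 2))"
    by (simp add: omega_minus_inverse norm_omega_root norm_divide norm_power)
  also have "\<dots> \<le> exp (- Im lam / (2 + Im lam)) ^ nat \<bar>k\<bar> / sqrt (norm (lam - 2) * norm (lam + 2))"
    using norm_omega_le_exp[OF assms] by (intro divide_right_mono power_mono) auto
  also have "exp (- Im lam / (2 + Im lam)) ^ nat \<bar>k\<bar> = exp (- Im lam / (2 + Im lam) * \<bar>k\<bar>)"
    by (simp add: exp_of_nat_mult[symmetric] mult.commute)
  finally show ?thesis .
qed

lemma norm_of_real_add_scaled_ge:
  fixes a e m M p :: real and z :: complex
  assumes "0 < e" "e \<le> \<bar>a\<bar>" "0 < p" "0 < m" "m \<le> Im z" "norm z \<le> M"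
  shows "min (e / 2) (m * e / (2 * M)) \<le> norm (of_real a + z / of_real p)"
proof (cases "norm z / p \<le> e / 2")
  case True
  have "e - e / 2 \<le> norm (of_real a :: complex) - norm (z / of_real p)"
    using True assms by (simp add: norm_divide)
  also have "\<dots> \<le> norm (of_real a + z / of_real p)"
    by (rule norm_diff_ineq)
  finally show ?thesis by simp
next
  case False
  have "0 < M" using assms abs_Im_le_cmod[of z] by linarith
  have "p < 2 * norm z / e" using False assms by (simp add: field_simps)
  also have "\<dots> \<le> 2 * M / e" using assms by (simp add: divide_right_mono)
  finally have "m * e / (2 * M) \<le> m / p"
    using assms \<open>0 < M\<close> by (simp add: field_simps)
  also have "\<dots> \<le> Im (of_real a + z / of_real p)"
    using assms by (simp add: Im_divide_of_real divide_right_mono)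
  also have "\<dots> \<le> norm (of_real a + z / of_real p)"
    using abs_Im_le_cmod by (rule abs_le_D1)
  finally show ?thesis by simp
qed

lemma abs_a_coeff_shifted_le:
  fixes x0 m M p :: real and z :: complex
  assumes "\<bar>x0\<bar> < 2" "0 < m" "m \<le> Im z" "norm z \<le> M" "1 \<le> p"
  defines "\<delta> \<equiv> min ((2 - \<bar>x0\<bar>) / 2) (m * (2 - \<bar>x0\<bar>) / (2 * M))"
  shows "\<bar>a_coeff (of_real x0 + z / of_real p) k\<bar> \<le> exp (- m / (2 + M) * \<bar>k\<bar> / p) / \<delta>"
proof -
  define lam where "lam = of_real x0 + z / of_real p"
  have Im_lam: "Im lam = Im z / p"
    by (simp add: lam_def Im_divide_of_real)
  have "m / p \<le> Im lam"
    using assms by (simp add: Im_lam divide_right_mono)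
  have "Im lam \<le> Im z"
    using assms unfolding Im_lam by (simp add: divide_le_eq mult_le_cancel_left1)
  also have "\<dots> \<le> M" using assms abs_Im_le_cmod[of z] by linarith
  finally have "Im lam \<le> M" .
  have "0 < m / p" using assms by simp
  have "m / (2 + M) / p = (m / p) / (2 + M)" by simp
  also have "\<dots> \<le> Im lam / (2 + M)"
    using \<open>m / p \<le> Im lam\<close> \<open>Im lam \<le> M\<close> \<open>0 < m / p\<close> by (intro divide_right_mono) auto
  also have "\<dots> \<le> Im lam / (2 + Im lam)"
    using \<open>m / p \<le> Im lam\<close> \<open>Im lam \<le> M\<close> \<open>0 < m / p\<close> by (intro divide_left_mono) auto
  finally have exponent: "m / (2 + M) / p \<le> Im lam / (2 + Im lam)" .
  have "0 < \<delta>" using assms abs_Im_le_cmod[of z] by (simp add: \<delta>_def)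
  have "\<delta> \<le> norm (lam - 2)" "\<delta> \<le> norm (lam + 2)"
    using norm_of_real_add_scaled_ge[of "2 - \<bar>x0\<bar>" "x0 - 2" p m z M]
      norm_of_real_add_scaled_ge[of "2 - \<bar>x0\<bar>" "x0 + 2" p m z M] assms
    by (auto simp: \<delta>_def lam_def algebra_simps)
  then have "\<delta> \<le> sqrt (norm (lam - 2) * norm (lam + 2))"
    using \<open>0 < \<delta>\<close> by (intro real_le_rsqrt) (simp add: power2_eq_square mult_mono)
  moreover have "- Im lam / (2 + Im lam) * \<bar>k\<bar> \<le> - m / (2 + M) * \<bar>k\<bar> / p"
    using mult_right_mono[OF exponent, of "\<bar>k\<bar>"] by simp
  then have "exp (- Im lam / (2 + Im lam) * \<bar>k\<bar>) \<le> exp (- m / (2 + M) * \<bar>k\<bar> / p)"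
    by simp
  ultimately have "exp (- Im lam / (2 + Im lam) * \<bar>k\<bar>) / sqrt (norm (lam - 2) * norm (lam + 2))
      \<le> exp (- m / (2 + M) * \<bar>k\<bar> / p) / \<delta>"
    using \<open>0 < \<delta>\<close> by (intro frac_le) auto
  with abs_a_coeff_le[of lam k] \<open>0 < m / p\<close> \<open>m / p \<le> Im lam\<close> show ?thesis
    by (simp add: lam_def)
qed

lemma compact_Im_pos_bounded_below:
  assumes "compact K" "K \<subseteq> {z. 0 < Im z}"
  obtains m where "0 < m" "\<forall>z\<in>K. m \<le> Im z"
proof (cases "K = {}")
  case False
  obtain z0 where "z0 \<in> K" "\<forall>z\<in>K. Im z0 \<le> Im z"
    using continuous_attains_inf[OF assms(1) False continuous_on_Im[OF continuous_on_id]]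
    by blast
  with assms(2) show ?thesis by (intro that[of "Im z0"]) auto
qed (use that[of 1] in auto)

lemma abs_phi_coeff_le:
  assumes "\<forall>j\<in>{1..N}. \<bar>a_coeff (of_real x0 + \<eta> j / of_real (real n powr \<alpha>)) k\<bar> \<le> A"
  shows "\<bar>phi_coeff x0 \<alpha> n N c \<eta> k\<bar> \<le> A / real n powr \<alpha> * (\<Sum>j=1..N. \<bar>c j\<bar>)"
proof -
  have "\<bar>\<Sum>j=1..N. c j * a_coeff (of_real x0 + \<eta> j / of_real (real n powr \<alpha>)) k\<bar>
      \<le> (\<Sum>j=1..N. \<bar>c j\<bar>) * A"
    unfolding sum_distrib_right using assms
    by (intro order.trans[OF sum_abs] sum_mono) (auto simp: abs_mult intro!: mult_left_mono)
  then show ?thesis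
    unfolding phi_coeff_def by (simp add: abs_mult divide_right_mono mult.commute)
qed

theorem lemma4p1:
  fixes x0 \<alpha> :: real and K :: "complex set"
  assumes "-2 < x0" "x0 < 2" "0 < \<alpha>" "\<alpha> < 1"
    and "compact K" "K \<subseteq> {\<eta>. Im \<eta> > 0}"
  shows "\<exists>d1>0. \<exists>d2>0. \<forall>n::nat. \<forall>N::nat. \<forall>c::nat \<Rightarrow> real. \<forall>\<eta>::nat \<Rightarrow> complex. \<forall>k::int.
           n \<ge> 1 \<longrightarrow> (\<forall>j\<in>{1..N}. \<eta> j \<in> K) \<longrightarrow>
           \<bar>phi_coeff x0 \<alpha> n N c \<eta> k\<bar>
             \<le> d1 / real n powr \<alpha> * (\<Sum>j=1..N. \<bar>c j\<bar>) * exp (- d2 * real_of_int \<bar>k\<bar> / real n powr \<alpha>)"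
proof -
  obtain m where m: "0 < m" "\<forall>z\<in>K. m \<le> Im z"
    using compact_Im_pos_bounded_below assms(5,6) by blast
  obtain M where M: "0 < M" "\<forall>z\<in>K. norm z \<le> M"
    using compact_imp_bounded[OF assms(5)] bounded_pos by blast
  define \<delta> where "\<delta> = min ((2 - \<bar>x0\<bar>) / 2) (m * (2 - \<bar>x0\<bar>) / (2 * M))"
  have "0 < \<delta>" using assms m M by (simp add: \<delta>_def)
  have "\<bar>phi_coeff x0 \<alpha> n N c \<eta> k\<bar>
      \<le> (1 / \<delta>) / real n powr \<alpha> * (\<Sum>j=1..N. \<bar>c j\<bar>) * exp (- (m / (2 + M)) * \<bar>k\<bar> / real n powr \<alpha>)"
    if "1 \<le> n" "\<forall>j\<in>{1..N}. \<eta> j \<in> K" for n N c \<eta> k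
  proof -
    have "1 \<le> real n powr \<alpha>" using that assms by (simp add: ge_one_powr_ge_zero)
    then have "\<forall>j\<in>{1..N}. \<bar>a_coeff (of_real x0 + \<eta> j / of_real (real n powr \<alpha>)) k\<bar>
        \<le> exp (- (m / (2 + M)) * \<bar>k\<bar> / real n powr \<alpha>) / \<delta>"
      using abs_a_coeff_shifted_le[of x0 m _ M "real n powr \<alpha>" k] that assms m M
      by (simp add: \<delta>_def abs_less_iff)
    from abs_phi_coeff_le[OF this] show ?thesis by (simp add: field_simps)
  qed
  moreover have "0 < m / (2 + M)" using m M by simp
  ultimately show ?thesis
    using \<open>0 < \<delta>\<close> by (intro exI[of _ "1 / \<delta>"] exI[of _ "m / (2 + M)"]) auto
qed

end
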